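(* Let $0<c\le\tfrac12$. Suppose Skeptic starts with capital $\mathcal{K}_0=1$ and plays $\mathcal{P}_c$: $M_n=-c\,\overline{x}_{n-1}\mathcal{K}_{n-1}$ for all $n\ge1$. His capital is then \[ \mathcal{K}_n=\prod_{i=2}^n\bigl(1-c\,\overline{x}_{i-1}x_i\bigr). \] Then $\mathcal{K}_n(\xi)\ge0$ for all $\xi\in\Omega$ and all $n$. Moreover $\mathcal{K}_n(\xi)\to\infty$ for every path $\xi\notin E_1^c$, where \[ E_1^c:=\{\xi:\ \limsup_{n\to\infty}(1+2c)\sqrt n\,|\overline{x}_n|\ge1\}. \] That is, Skeptic can force $E_1^c$ with $\mathcal{P}_c$.
   Context: Fair-coin game: the initial capital is $\mathcal{K}_0$. In rounds $n=1,2,\dots$ Skeptic announces $M_n\in\mathbb{R}$ (depending only on $x_1,\dots,x_{n-1}$), then Reality announces $x_n\in\{-1,1\}$, and $\mathcal{K}_n:=\mathcal{K}_{n-1}+M_nx_n$. A path is an infinite sequence $\xi=x_1x_2\cdots\in\{-1,1\}^{\mathbb{N}}$, and $\Omega$ is the set of paths. We write $s_n:=x_1+\cdots+x_n$ and $\overline{x}_n:=s_n/n$, with $s_0=\overline{x}_0=0$. Skeptic forces an event $E$ if he has a strategy such that, starting from capital $1$, his capital is nonnegative at all times on all paths and tends to $\infty$ on every path not in $E$. *)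

theory Defs
  imports Complex_Main "HOL-Library.Extended_Real"
begin

text \<open>A path is a function xi :: nat => real; the moves are x_1 = xi 1, x_2 = xi 2, ...
  (the value xi 0 is unused). The set of paths Omega consists of those with every
  move x_n (n >= 1) in {-1, 1}.\<close>

definition paths :: "(nat \<Rightarrow> real) set" where
  "paths = {xi. \<forall>n\<ge>1. xi n \<in> {-1, 1}}"

definition psum :: "(nat \<Rightarrow> real) \<Rightarrow> nat \<Rightarrow> real" where
  "psum xi n = (\<Sum>i=1..n. xi i)"

text \<open>xbar_n = s_n / n, with xbar_0 = 0 (division by zero gives 0)\<close>
definition xbar :: "(nat \<Rightarrow> real) \<Rightarrow> nat \<Rightarrow> real" where
  "xbar xi n = psum xi n / real n"

fun capital_P :: "real \<Rightarrow> (nat \<Rightarrow> real) \<Rightarrow> nat \<Rightarrow> real" where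
  "capital_P c xi 0 = 1"
| "capital_P c xi (Suc n) =
     capital_P c xi n + (- c * xbar xi n * capital_P c xi n) * xi (Suc n)"

definition E1c :: "real \<Rightarrow> (nat \<Rightarrow> real) set" where
  "E1c c = {xi \<in> paths.
     limsup (\<lambda>n. ereal ((1 + 2*c) * sqrt (real n) * \<bar>xbar xi n\<bar>)) \<ge> 1}"

end

theory Submission
  imports Defs
begin

text \<open>Let q_n = n xbar_n^2 = s_n^2/n and \<beta> = 2c^3/(1+2c)^2. Since ln (1 + t) \<ge> t - 2t^2
  for |t| \<le> 1/2, one round of P_c increases the potential ln K_n + (c/2) q_n by at least
  \<beta>/n as long as (1+2c)^2 q \<le> 1 before and after the round: the first-order term of
  ln K_{n+1} - ln K_n cancels the cross term of q_{n+1} - q_n, and the remaining second-order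
  terms are controlled by the bound on q. Off E_1^c this bound holds from some time on, and
  q stays bounded, so ln K_n \<ge> \<beta> ln n - O(1).\<close>

lemma ln_one_plus_ge:
  fixes t :: real
  assumes "\<bar>t\<bar> \<le> 1/2"
  shows "t - 2 * t\<^sup>2 \<le> ln (1 + t)"
proof (cases "t \<ge> 0")
  case True
  then have "t - t\<^sup>2 \<le> ln (1 + t)" using assms by (intro ln_one_plus_pos_lower_bound) auto
  then show ?thesis using zero_le_power2[of t] by linarith
next
  case False
  then have "- (-t) - 2 * (-t)\<^sup>2 \<le> ln (1 - (-t))"
    using assms by (intro ln_one_minus_pos_lower_bound) auto
  then show ?thesis by simp
qed

lemma ln_add_one_minus_ln_le:
  fixes m :: real
  assumes "m \<ge> 1"
  shows "ln (m + 1) - ln m \<le> 1 / m"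
proof -
  have "m + 1 = m * (1 + 1/m)" "1 + 1/m > 0" using assms by (simp_all add: field_simps)
  then have "ln (m + 1) = ln m + ln (1 + 1/m)" using assms by (simp add: ln_mult)
  moreover have "ln (1 + 1/m) \<le> 1/m" using assms by (intro ln_add_one_self_le_self) simp
  ultimately show ?thesis by simp
qed

lemma abs_xbar_le_1:
  assumes "xi \<in> paths"
  shows "\<bar>xbar xi n\<bar> \<le> 1"
proof (cases "n = 0")
  case True
  then show ?thesis by (simp add: xbar_def)
next
  case False
  have "\<bar>psum xi n\<bar> \<le> (\<Sum>i=1..n. \<bar>xi i\<bar>)" unfolding psum_def by (rule sum_abs)
  also have "\<dots> = (\<Sum>i=1..n. 1)" using assms by (intro sum.cong) (auto simp: paths_def)
  finally show ?thesis using False by (simp add: xbar_def divide_le_eq_1)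
qed

lemma xbar_Suc: "xbar xi (Suc m) = (real m * xbar xi m + xi (Suc m)) / (real m + 1)"
  by (simp add: xbar_def psum_def add.commute)

lemma abs_relative_gain_le:
  assumes "xi \<in> paths" "n \<ge> 1" "c \<ge> 0"
  shows "\<bar>c * xbar xi m * xi n\<bar> \<le> c"
proof -
  have "\<bar>xi n\<bar> = 1" using assms by (auto simp: paths_def)
  then have "\<bar>c * xbar xi m * xi n\<bar> = c * \<bar>xbar xi m\<bar>" using assms by (simp add: abs_mult)
  also have "\<dots> \<le> c" using abs_xbar_le_1[OF assms(1)] assms(3) by (simp add: mult_left_le)
  finally show ?thesis .
qed

lemma capital_P_Suc:
  "capital_P c xi (Suc n) = capital_P c xi n * (1 - c * xbar xi n * xi (Suc n))"
  by (simp add: algebra_simps)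

lemma capital_P_eq_prod: "capital_P c xi n = (\<Prod>i=2..n. 1 - c * xbar xi (i-1) * xi i)"
proof (induction n)
  case 0
  then show ?case by simp
next
  case (Suc n)
  show ?case
  proof (cases "n = 0")
    case True
    then show ?thesis by (simp add: xbar_def)
  next
    case False
    then have "{2..Suc n} = insert (Suc n) {2..n}" by auto
    then show ?thesis by (simp add: capital_P_Suc Suc.IH mult.commute del: capital_P.simps)
  qed
qed

lemma capital_P_pos:
  assumes "xi \<in> paths" "c \<le> 1/2" "c \<ge> 0"
  shows "capital_P c xi n > 0"
proof (induction n)
  case 0
  then show ?case by simp
next
  case (Suc n)
  have "\<bar>c * xbar xi n * xi (Suc n)\<bar> \<le> c" using assms by (intro abs_relative_gain_le) auto
  then have "1 - c * xbar xi n * xi (Suc n) > 0" using assms(2) by linarith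
  then show ?case using Suc.IH by (simp add: capital_P_Suc)
qed

definition scaled_mean_sq :: "(nat \<Rightarrow> real) \<Rightarrow> nat \<Rightarrow> real" where
  "scaled_mean_sq xi n = real n * (xbar xi n)\<^sup>2"

lemma scaled_mean_sq_Suc:
  "scaled_mean_sq xi (Suc m) = (real m * xbar xi m + xi (Suc m))\<^sup>2 / (real m + 1)"
  by (simp add: scaled_mean_sq_def xbar_Suc power_divide power2_eq_square add.commute)

text \<open>One round in the variables Q0 = m y^2 and Q1 = (m y + x)^2/(m + 1): the left-hand side
  equals (c/2)(1 - Q1 - 4c Q0)/m, and 1 - (1 + 4c)/(1+2c)^2 = 4c^2/(1+2c)^2.\<close>

lemma potential_increment_ge:
  fixes m y x c :: real
  assumes m: "m \<ge> 1" and x: "x\<^sup>2 = 1" and c: "0 < c"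
    and q0: "(1+2*c)\<^sup>2 * (m * y\<^sup>2) \<le> 1"
    and q1: "(1+2*c)\<^sup>2 * ((m*y + x)\<^sup>2 / (m + 1)) \<le> 1"
  shows "2*c^3 / (1+2*c)\<^sup>2 / m
           \<le> (-c*y*x) - 2*(-c*y*x)\<^sup>2 + c/2 * ((m*y + x)\<^sup>2 / (m + 1) - m*y\<^sup>2)"
proof -
  define Q0 where "Q0 = m * y\<^sup>2"
  define Q1 where "Q1 = (m*y + x)\<^sup>2 / (m + 1)"
  define A where "A = (1+2*c)\<^sup>2"
  have A: "A > 0" using c by (simp add: A_def)
  have "Q1 * (m + 1) = (m*y + x)\<^sup>2" using m by (simp add: Q1_def)
  also have "\<dots> = m*m*y*y + 2*m*y*x + x\<^sup>2" by (simp add: power2_eq_square algebra_simps)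
  finally have Q1_eq: "Q1 * (m + 1) = m*m*y*y + 2*m*y*x + 1" using x by simp
  have "(-c*y*x) - 2*(c\<^sup>2 * y\<^sup>2) + c/2 * (Q1 - Q0) - c/2 * (1 - Q1 - 4*c*Q0) / m
      = c/2 * (Q1 * (m + 1) - (m*m*y*y + 2*m*y*x + 1)) / m"
    using m by (simp add: Q0_def field_simps power2_eq_square)
  moreover have "(-c*y*x)\<^sup>2 = c\<^sup>2 * y\<^sup>2" using x by (simp add: power_mult_distrib)
  ultimately have identity:
      "(-c*y*x) - 2*(-c*y*x)\<^sup>2 + c/2 * (Q1 - Q0) = c/2 * (1 - Q1 - 4*c*Q0) / m"
    using Q1_eq by simp
  have "A * Q0 \<le> 1" "A * Q1 \<le> 1" using q0 q1 by (simp_all add: A_def Q0_def Q1_def)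
  then have Q0_le: "Q0 \<le> 1/A" and Q1_le: "Q1 \<le> 1/A"
    using A by (simp_all add: pos_le_divide_eq mult.commute)
  have "4*c*Q0 \<le> 4*c*(1/A)" using c Q0_le by (intro mult_left_mono) auto
  then have "1 - 1/A - 4*c/A \<le> 1 - Q1 - 4*c*Q0" using Q1_le by simp
  moreover have "1 - 1/A - 4*c/A = 4*c^2/A"
  proof -
    have "1 - 1/A - 4*c/A = (A - 1 - 4*c)/A" using A by (simp add: field_simps)
    moreover have "A - 1 - 4*c = 4*c^2" by (simp add: A_def power2_eq_square algebra_simps)
    ultimately show ?thesis by simp
  qed
  ultimately have "c/2 * (4*c^2/A) / m \<le> c/2 * (1 - Q1 - 4*c*Q0) / m"
    using c m by (intro divide_right_mono mult_left_mono) auto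
  moreover have "c/2 * (4*c^2/A) / m = 2*c^3 / (1+2*c)\<^sup>2 / m"
    by (simp add: A_def power3_eq_cube power2_eq_square)
  ultimately show ?thesis using identity by (simp add: Q0_def Q1_def)
qed

lemma ln_capital_P_increment_ge:
  assumes xi: "xi \<in> paths" and c: "0 < c" "c \<le> 1/2" and m: "m \<ge> 1"
    and q0: "(1+2*c)\<^sup>2 * scaled_mean_sq xi m \<le> 1"
    and q1: "(1+2*c)\<^sup>2 * scaled_mean_sq xi (Suc m) \<le> 1"
  shows "2*c^3 / (1+2*c)\<^sup>2 / real m
           \<le> ln (capital_P c xi (Suc m)) - ln (capital_P c xi m)
              + c/2 * (scaled_mean_sq xi (Suc m) - scaled_mean_sq xi m)"
proof -
  define t where "t = - c * xbar xi m * xi (Suc m)"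
  have "\<bar>t\<bar> \<le> c" using abs_relative_gain_le[OF xi, of "Suc m" c m] c by (simp add: t_def)
  then have t: "\<bar>t\<bar> \<le> 1/2" using c by linarith
  have "capital_P c xi (Suc m) = capital_P c xi m * (1 + t)" by (simp add: t_def algebra_simps)
  moreover have "capital_P c xi m > 0" "1 + t > 0" using capital_P_pos[OF xi] c t by auto
  ultimately have ln_step: "ln (capital_P c xi (Suc m)) = ln (capital_P c xi m) + ln (1 + t)"
    by (simp add: ln_mult)
  have "xi (Suc m) \<in> {-1, 1}" using xi by (simp add: paths_def)
  then have x: "(xi (Suc m))\<^sup>2 = 1" by auto
  have "2*c^3 / (1+2*c)\<^sup>2 / real m
      \<le> t - 2*t\<^sup>2 + c/2 * ((real m * xbar xi m + xi (Suc m))\<^sup>2 / (real m + 1) - real m * (xbar xi m)\<^sup>2)"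
    unfolding t_def using m
    by (intro potential_increment_ge x c(1) q0[unfolded scaled_mean_sq_def]
        q1[unfolded scaled_mean_sq_Suc]) simp
  then have "2*c^3 / (1+2*c)\<^sup>2 / real m
      \<le> t - 2*t\<^sup>2 + c/2 * (scaled_mean_sq xi (Suc m) - scaled_mean_sq xi m)"
    by (subst scaled_mean_sq_Suc) (simp add: scaled_mean_sq_def)
  with ln_one_plus_ge[OF t] ln_step show ?thesis by linarith
qed

lemma eventually_scaled_mean_sq_le:
  assumes "xi \<in> paths" "xi \<notin> E1c c" "c \<ge> 0"
  shows "eventually (\<lambda>n. (1+2*c)\<^sup>2 * scaled_mean_sq xi n \<le> 1) sequentially"
proof -
  have "limsup (\<lambda>n. ereal ((1 + 2*c) * sqrt (real n) * \<bar>xbar xi n\<bar>)) < 1"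
    using assms by (simp add: E1c_def not_le)
  then have "eventually (\<lambda>n. (1 + 2*c) * sqrt (real n) * \<bar>xbar xi n\<bar> < 1) sequentially"
    by (auto dest: Limsup_lessD)
  then show ?thesis
  proof (rule eventually_mono)
    fix n
    assume "(1 + 2*c) * sqrt (real n) * \<bar>xbar xi n\<bar> < 1"
    moreover have "0 \<le> (1 + 2*c) * sqrt (real n) * \<bar>xbar xi n\<bar>" using assms(3) by simp
    ultimately have "((1 + 2*c) * sqrt (real n) * \<bar>xbar xi n\<bar>)\<^sup>2 \<le> 1\<^sup>2"
      by (intro power_mono) auto
    then show "(1+2*c)\<^sup>2 * scaled_mean_sq xi n \<le> 1"
      by (simp add: scaled_mean_sq_def power_mult_distrib)
  qed
qed

lemma filterlim_at_top_by_log_drift: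
  fixes L g :: "nat \<Rightarrow> real"
  assumes \<beta>: "\<beta> > 0"
    and drift: "eventually (\<lambda>m. \<beta> * (ln (real (Suc m)) - ln (real m))
                                \<le> (L (Suc m) + g (Suc m)) - (L m + g m)) sequentially"
    and g_bounded: "eventually (\<lambda>n. g n \<le> B) sequentially"
  shows "filterlim L at_top sequentially"
proof -
  obtain N where N: "\<And>n. n \<ge> N \<Longrightarrow> \<beta> * (ln (real (Suc n)) - ln (real n))
                                \<le> (L (Suc n) + g (Suc n)) - (L n + g n) \<and> g n \<le> B"
    using eventually_conj[OF drift g_bounded] by (auto simp: eventually_sequentially)
  define F where "F n = L n + g n - \<beta> * ln (real n)" for n
  have F_mono: "F N \<le> F n" if "n \<ge> N" for n
    using that
  proof (induction n rule: dec_induct)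
    case base
    then show ?case by simp
  next
    case (step n)
    then show ?case using N[of n] by (simp add: F_def algebra_simps)
  qed
  have "filterlim (\<lambda>n. F N - B + \<beta> * ln (real n)) at_top sequentially"
    by (intro filterlim_tendsto_add_at_top[OF tendsto_const] filterlim_tendsto_pos_mult_at_top
        [OF tendsto_const \<beta>] filterlim_compose[OF ln_at_top filterlim_real_sequentially])
  moreover have "eventually (\<lambda>n. F N - B + \<beta> * ln (real n) \<le> L n) sequentially"
    unfolding eventually_sequentially using F_mono N by (fastforce simp: F_def)
  ultimately show ?thesis by (rule filterlim_at_top_mono)
qed

lemma capital_P_tendsto_at_top:
  assumes c: "0 < c" "c \<le> 1/2" and xi: "xi \<in> paths" "xi \<notin> E1c c"
  shows "filterlim (capital_P c xi) at_top sequentially"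
proof -
  let ?q = "scaled_mean_sq xi"
  define \<beta> where "\<beta> = 2*c^3 / (1+2*c)\<^sup>2"
  have q_le: "eventually (\<lambda>n. (1+2*c)\<^sup>2 * ?q n \<le> 1) sequentially"
    using eventually_scaled_mean_sq_le[OF xi] c by simp
  have drift: "\<beta> * (ln (real (Suc m)) - ln (real m))
      \<le> (ln (capital_P c xi (Suc m)) + c/2 * ?q (Suc m)) - (ln (capital_P c xi m) + c/2 * ?q m)"
    if "m \<ge> 1" "(1+2*c)\<^sup>2 * ?q m \<le> 1" "(1+2*c)\<^sup>2 * ?q (Suc m) \<le> 1" for m
  proof -
    have "\<beta> * (ln (real m + 1) - ln (real m)) \<le> \<beta> * (1 / real m)"
      using c that ln_add_one_minus_ln_le[of "real m"] by (intro mult_left_mono) (auto simp: \<beta>_def)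
    also have "\<dots> \<le> ln (capital_P c xi (Suc m)) - ln (capital_P c xi m) + c/2 * (?q (Suc m) - ?q m)"
      using ln_capital_P_increment_ge[OF xi(1) c that] by (simp add: \<beta>_def)
    finally show ?thesis by (simp add: algebra_simps)
  qed
  have q_bounded: "c/2 * ?q n \<le> c/2" if "(1+2*c)\<^sup>2 * ?q n \<le> 1" for n
  proof -
    have "1 * ?q n \<le> (1+2*c)\<^sup>2 * ?q n"
      using c by (intro mult_right_mono) (auto simp: scaled_mean_sq_def)
    then show ?thesis using that c by simp
  qed
  have "filterlim (\<lambda>n. ln (capital_P c xi n)) at_top sequentially"
  proof (rule filterlim_at_top_by_log_drift)
    show "\<beta> > 0" using c by (simp add: \<beta>_def)
    have "eventually (\<lambda>m. (1+2*c)\<^sup>2 * ?q (Suc m) \<le> 1) sequentially"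
      using q_le by (rule eventually_sequentially_Suc[THEN iffD2])
    with q_le eventually_ge_at_top[of 1] show "eventually (\<lambda>m. \<beta> * (ln (real (Suc m)) - ln (real m))
      \<le> (ln (capital_P c xi (Suc m)) + c/2 * ?q (Suc m)) - (ln (capital_P c xi m) + c/2 * ?q m))
      sequentially"
      by eventually_elim (rule drift)
    show "eventually (\<lambda>n. c/2 * ?q n \<le> c/2) sequentially"
      using q_le by (rule eventually_mono) (rule q_bounded)
  qed
  then have "filterlim (\<lambda>n. exp (ln (capital_P c xi n))) at_top sequentially"
    by (rule filterlim_compose[OF exp_at_top])
  moreover have "exp (ln (capital_P c xi n)) = capital_P c xi n" for n
    using capital_P_pos[OF xi(1)] c by simp
  ultimately show ?thesis by simp
qed

theorem lemma1:
  fixes c :: real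
  assumes "0 < c" and "c \<le> 1/2"
  shows "(\<forall>xi\<in>paths. \<forall>n. capital_P c xi n = (\<Prod>i=2..n. 1 - c * xbar xi (i-1) * xi i))
    \<and> (\<forall>xi\<in>paths. \<forall>n. capital_P c xi n \<ge> 0)
    \<and> (\<forall>xi\<in>paths. xi \<notin> E1c c \<longrightarrow> filterlim (capital_P c xi) at_top sequentially)"
  using capital_P_eq_prod capital_P_pos[OF _ assms(2) less_imp_le[OF assms(1)]]
    capital_P_tendsto_at_top[OF assms] less_imp_le by blast

end
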